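(* Let $\rhd$ be a value system and let $\mathcal{I}$ be an assignment that is admissible for $\rhd$. Then $\mathcal{I}$ is an interpretation and $s\rhd\hat{\mathcal{I}}s$ for all terms $s$. Furthermore, if $\rhd$ is functional, then $\mathcal{I}$ is surjective.
   Context: Types: a countable set of base types ($\beta$); every base type is a type and $\sigma\tau$ is a type (functions from $\sigma$ to $\tau$) for types $\sigma,\tau$. Countably many names, each with a unique type, infinitely many of each type. Terms: names; $st:\mu$ for $s:\tau\mu,t:\tau$; $\lambda x.t:\sigma\tau$ for a name $x:\sigma$, $t:\tau$. $\mathrm{Wff}_\sigma$: terms of type $\sigma$. A frame $\mathcal{D}$ maps types to nonempty sets with $\mathcal{D}(\sigma\tau)\subseteq(\mathcal{D}\sigma\to\mathcal{D}\tau)$. An assignment $\mathcal{I}$ into $\mathcal{D}$ extends $\mathcal{D}$ and maps each name $x:\sigma$ into $\mathcal{D}\sigma$; $\mathcal{I}^x_a$ is the update at $x$. Partial evaluation: $\hat{\mathcal{I}}x=\mathcal{I}x$; $\hat{\mathcal{I}}(st)=(\hat{\mathcal{I}}s)(\hat{\mathcal{I}}t)$ when both are defined; $\hat{\mathcal{I}}(\lambda x.s)=f$ if $\lambda x.s:\sigma\tau$, $f\in\mathcal{D}(\sigma\tau)$ and $\widehat{\mathcal{I}^x_a}s=fa$ for all $a\in\mathcal{D}\sigma$ (undefined otherwise). An interpretation is an assignment whose evaluation is total; it is surjective if for every type $\sigma$ and every $a\in\mathcal{I}\sigma$ there is $s:\sigma$ with $\hat{\mathcal{I}}s=a$. Normalization: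 a fixed type-preserving total $[\cdot]$ on terms with (N1) $[[s]]=[s]$; (N2) $[[s]t]=[st]$; (N3) $[xs_1\dots s_n]=x[s_1]\dots[s_n]$ for a name $x$, $n\ge0$, $xs_1\dots s_n$ of base type; (N4) $\hat{\mathcal{I}}[s]=\hat{\mathcal{I}}s$ for every interpretation. A substitution is a type-preserving partial function $\theta$ from names to terms ($\theta^x_s$ the update); every substitution extends to a type-preserving total $\hat\theta$ with (S1) $\hat\theta x=\theta x$ if $x\in\mathrm{Dom}\theta$, else $x$; (S2) $\hat\theta(st)=(\hat\theta s)(\hat\theta t)$; (S3) $[(\hat\theta(\lambda x.s))t]=[\widehat{\theta^x_t}s]$; (S4) $[\hat\emptyset s]=[s]$ where $\emptyset$ is the empty substitution. A value system is a function $\rhd$ mapping each base type $\beta$ to a binary relation $\rhd_\beta$ with $\mathrm{Dom}(\rhd_\beta)\subseteq\mathrm{Wff}_\beta$ such that $s\rhd_\beta a$ iff $[s]\rhd_\beta a$; extended by $\mathcal{D}\sigma:=\mathrm{Ran}(\rhd_\sigma)$ and $\rhd_{\sigma\tau}:=\{(s,f)\in\mathrm{Wff}_{\sigma\tau}\times(\mathcal{D}\sigma\to\mathcal{D}\tau):\forall(t,a)\in\rhd_\sigma,\ (st,fa)\in\rhd_\tau\}$. It is functional if each $\rhd_\beta$ ($\beta$ a base type) is a functional relation. An assignment $\mathcal{I}$ is admissible for $\rhd$ if $\mathcal{I}\sigma=\mathcal{D}\sigma$ for all types $\sigma$ and $x\rhd\mathcal{I}x$ for all names $x$. *)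

theory Defs
  imports Main "HOL-Library.Countable"
begin

datatype 'b ty = Base 'b | Fn "'b ty" "'b ty"

text \<open>Names: countably many, each with a unique type (the second component),
  infinitely many of each type.\<close>
type_synonym 'b name = "nat \<times> 'b ty"

definition nty :: "'b name \<Rightarrow> 'b ty" where "nty x = snd x"

datatype 'b tm = Nm "'b name" | Ap "'b tm" "'b tm" | Lm "'b name" "'b tm"

fun typeof :: "'b tm \<Rightarrow> 'b ty option" where
  "typeof (Nm x) = Some (nty x)"
| "typeof (Ap s t) = (case typeof s of
      Some (Fn \<sigma> \<tau>) \<Rightarrow> (if typeof t = Some \<sigma> then Some \<tau> else None)
    | _ \<Rightarrow> None)"
| "typeof (Lm x s) = map_option (Fn (nty x)) (typeof s)"

definition Wff :: "'b ty \<Rightarrow> 'b tm set" where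
  "Wff \<sigma> = {s. typeof s = Some \<sigma>}"

text \<open>Values live in a universe type 'v; an element f of a function domain
  acts on arguments through the application operation ap.  The frame condition
  D(st) \<subseteq> (D s \<rightarrow> D t) is rendered as: ap maps D(st) \<times> D s into D t and
  elements of D(st) are determined by their action on D s (extensionality).\<close>

definition frame :: "('v \<Rightarrow> 'v \<Rightarrow> 'v) \<Rightarrow> ('b ty \<Rightarrow> 'v set) \<Rightarrow> bool" where
  "frame ap D \<longleftrightarrow>
     (\<forall>\<sigma>. D \<sigma> \<noteq> {}) \<and>
     (\<forall>\<sigma> \<tau>. \<forall>f\<in>D (Fn \<sigma> \<tau>). \<forall>a\<in>D \<sigma>. ap f a \<in> D \<tau>) \<and>
     (\<forall>\<sigma> \<tau>. \<forall>f\<in>D (Fn \<sigma> \<tau>). \<forall>g\<in>D (Fn \<sigma> \<tau>). (\<forall>a\<in>D \<sigma>. ap f a = ap g a) \<longrightarrow> f = g)"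

definition assignment :: "('v \<Rightarrow> 'v \<Rightarrow> 'v) \<Rightarrow> ('b ty \<Rightarrow> 'v set) \<Rightarrow> ('b name \<Rightarrow> 'v) \<Rightarrow> bool" where
  "assignment ap D I \<longleftrightarrow> frame ap D \<and> (\<forall>x. I x \<in> D (nty x))"

fun eval :: "('v \<Rightarrow> 'v \<Rightarrow> 'v) \<Rightarrow> ('b ty \<Rightarrow> 'v set) \<Rightarrow> ('b name \<Rightarrow> 'v) \<Rightarrow> 'b tm \<Rightarrow> 'v option" where
  "eval ap D I (Nm x) = Some (I x)"
| "eval ap D I (Ap s t) = (case (eval ap D I s, eval ap D I t) of
      (Some f, Some a) \<Rightarrow> Some (ap f a) | _ \<Rightarrow> None)"
| "eval ap D I (Lm x s) = (case typeof (Lm x s) of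
      Some (Fn \<sigma> \<tau>) \<Rightarrow>
        (if \<exists>f\<in>D (Fn \<sigma> \<tau>). \<forall>a\<in>D \<sigma>. eval ap D (I(x := a)) s = Some (ap f a)
         then Some (THE f. f \<in> D (Fn \<sigma> \<tau>) \<and> (\<forall>a\<in>D \<sigma>. eval ap D (I(x := a)) s = Some (ap f a)))
         else None)
    | _ \<Rightarrow> None)"

definition is_interp :: "('v \<Rightarrow> 'v \<Rightarrow> 'v) \<Rightarrow> ('b ty \<Rightarrow> 'v set) \<Rightarrow> ('b name \<Rightarrow> 'v) \<Rightarrow> bool" where
  "is_interp ap D I \<longleftrightarrow> assignment ap D I \<and> (\<forall>\<sigma>. \<forall>s\<in>Wff \<sigma>. eval ap D I s \<noteq> None)"

definition surjective_interp :: "('v \<Rightarrow> 'v \<Rightarrow> 'v) \<Rightarrow> ('b ty \<Rightarrow> 'v set) \<Rightarrow> ('b name \<Rightarrow> 'v) \<Rightarrow> bool" where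
  "surjective_interp ap D I \<longleftrightarrow> is_interp ap D I \<and>
     (\<forall>\<sigma>. \<forall>a\<in>D \<sigma>. \<exists>s\<in>Wff \<sigma>. eval ap D I s = Some a)"

definition normalization :: "('v \<Rightarrow> 'v \<Rightarrow> 'v) \<Rightarrow> ('b tm \<Rightarrow> 'b tm) \<Rightarrow> bool" where
  "normalization ap norm \<longleftrightarrow>
     (\<forall>\<sigma>. \<forall>s\<in>Wff \<sigma>. norm s \<in> Wff \<sigma>) \<and>
     (\<forall>\<sigma>. \<forall>s\<in>Wff \<sigma>. norm (norm s) = norm s) \<and>
     (\<forall>\<sigma> s t. Ap s t \<in> Wff \<sigma> \<longrightarrow> norm (Ap (norm s) t) = norm (Ap s t)) \<and>
     (\<forall>\<beta> x ss. foldl Ap (Nm x) ss \<in> Wff (Base \<beta>) \<longrightarrow>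
        norm (foldl Ap (Nm x) ss) = foldl Ap (Nm x) (map norm ss)) \<and>
     (\<forall>(D :: 'b ty \<Rightarrow> 'v set) I. is_interp ap D I \<longrightarrow>
        (\<forall>\<sigma>. \<forall>s\<in>Wff \<sigma>. eval ap D I (norm s) = eval ap D I s))"

definition substitution :: "('b name \<rightharpoonup> 'b tm) \<Rightarrow> bool" where
  "substitution \<theta> \<longleftrightarrow> (\<forall>x t. \<theta> x = Some t \<longrightarrow> t \<in> Wff (nty x))"

definition subst_ext :: "('b tm \<Rightarrow> 'b tm) \<Rightarrow> (('b name \<rightharpoonup> 'b tm) \<Rightarrow> 'b tm \<Rightarrow> 'b tm) \<Rightarrow> bool" where
  "subst_ext norm sub \<longleftrightarrow>
     (\<forall>\<theta>. substitution \<theta> \<longrightarrow>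
       (\<forall>\<sigma>. \<forall>s\<in>Wff \<sigma>. sub \<theta> s \<in> Wff \<sigma>) \<and>
       (\<forall>x. sub \<theta> (Nm x) = (case \<theta> x of Some t \<Rightarrow> t | None \<Rightarrow> Nm x)) \<and>
       (\<forall>\<sigma> s t. Ap s t \<in> Wff \<sigma> \<longrightarrow> sub \<theta> (Ap s t) = Ap (sub \<theta> s) (sub \<theta> t)) \<and>
       (\<forall>\<sigma> \<tau> x s t. Lm x s \<in> Wff (Fn \<sigma> \<tau>) \<longrightarrow> t \<in> Wff \<sigma> \<longrightarrow>
          norm (Ap (sub \<theta> (Lm x s)) t) = norm (sub (\<theta>(x \<mapsto> t)) s))) \<and>
     (\<forall>\<sigma>. \<forall>s\<in>Wff \<sigma>. norm (sub Map.empty s) = norm s)"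

text \<open>vs \<beta> s a  means  s \<rhd>_\<beta> a.\<close>
definition value_system :: "('b tm \<Rightarrow> 'b tm) \<Rightarrow> ('b \<Rightarrow> 'b tm \<Rightarrow> 'v \<Rightarrow> bool) \<Rightarrow> bool" where
  "value_system norm vs \<longleftrightarrow>
     (\<forall>\<beta> s a. vs \<beta> s a \<longrightarrow> s \<in> Wff (Base \<beta>)) \<and>
     (\<forall>\<beta> s a. s \<in> Wff (Base \<beta>) \<longrightarrow> (vs \<beta> s a \<longleftrightarrow> vs \<beta> (norm s) a))"

text \<open>Extension to all types.  fs \<sigma> \<tau> is the universe's copy of the full
  function space  D \<sigma> \<rightarrow> D \<tau>  (see full_function_spaces).\<close>
fun vrel :: "('b \<Rightarrow> 'b tm \<Rightarrow> 'v \<Rightarrow> bool) \<Rightarrow> ('v \<Rightarrow> 'v \<Rightarrow> 'v) \<Rightarrow> ('b ty \<Rightarrow> 'b ty \<Rightarrow> 'v set)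
              \<Rightarrow> 'b ty \<Rightarrow> 'b tm \<Rightarrow> 'v \<Rightarrow> bool" where
  "vrel vs ap fs (Base \<beta>) s a = vs \<beta> s a"
| "vrel vs ap fs (Fn \<sigma> \<tau>) s f =
     (s \<in> Wff (Fn \<sigma> \<tau>) \<and> f \<in> fs \<sigma> \<tau> \<and>
      (\<forall>t a. vrel vs ap fs \<sigma> t a \<longrightarrow> vrel vs ap fs \<tau> (Ap s t) (ap f a)))"

definition vdom :: "('b \<Rightarrow> 'b tm \<Rightarrow> 'v \<Rightarrow> bool) \<Rightarrow> ('v \<Rightarrow> 'v \<Rightarrow> 'v) \<Rightarrow> ('b ty \<Rightarrow> 'b ty \<Rightarrow> 'v set)
              \<Rightarrow> 'b ty \<Rightarrow> 'v set" where
  "vdom vs ap fs \<sigma> = {a. \<exists>s. vrel vs ap fs \<sigma> s a}"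

definition full_fs :: "('v \<Rightarrow> 'v \<Rightarrow> 'v) \<Rightarrow> 'v set \<Rightarrow> 'v set \<Rightarrow> 'v set \<Rightarrow> bool" where
  "full_fs ap A B F \<longleftrightarrow>
     (\<forall>f\<in>F. \<forall>a\<in>A. ap f a \<in> B) \<and>
     (\<forall>g. (\<forall>a\<in>A. g a \<in> B) \<longrightarrow> (\<exists>!f. f \<in> F \<and> (\<forall>a\<in>A. ap f a = g a)))"

definition full_function_spaces :: "('b \<Rightarrow> 'b tm \<Rightarrow> 'v \<Rightarrow> bool) \<Rightarrow> ('v \<Rightarrow> 'v \<Rightarrow> 'v)
              \<Rightarrow> ('b ty \<Rightarrow> 'b ty \<Rightarrow> 'v set) \<Rightarrow> bool" where
  "full_function_spaces vs ap fs \<longleftrightarrow>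
     (\<forall>\<sigma> \<tau>. full_fs ap (vdom vs ap fs \<sigma>) (vdom vs ap fs \<tau>) (fs \<sigma> \<tau>))"

definition functional_vs :: "('b \<Rightarrow> 'b tm \<Rightarrow> 'v \<Rightarrow> bool) \<Rightarrow> bool" where
  "functional_vs vs \<longleftrightarrow> (\<forall>\<beta> s a b. vs \<beta> s a \<longrightarrow> vs \<beta> s b \<longrightarrow> a = b)"

definition admissible :: "('b \<Rightarrow> 'b tm \<Rightarrow> 'v \<Rightarrow> bool) \<Rightarrow> ('v \<Rightarrow> 'v \<Rightarrow> 'v)
              \<Rightarrow> ('b ty \<Rightarrow> 'b ty \<Rightarrow> 'v set) \<Rightarrow> ('b name \<Rightarrow> 'v) \<Rightarrow> bool" where
  "admissible vs ap fs I \<longleftrightarrow>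
     assignment ap (vdom vs ap fs) I \<and> (\<forall>x. vrel vs ap fs (nty x) (Nm x) (I x))"

end

theory Submission
  imports Defs
begin

text \<open>The relation \<open>\<rhd>\<close> is a logical relation, so the argument is the fundamental lemma
  of logical relations: by induction on \<open>s\<close>, for every substitution \<open>\<theta>\<close> whose entries are
  related to the values of an assignment \<open>J\<close>, the term \<open>s\<close> evaluates under \<open>J\<close> to a value
  related to \<open>\<theta> s\<close>.  Relatedness is invariant under normalization, which handles the
  \<open>\<beta>\<close>-step in the \<open>\<lambda>\<close>-case (S3) and the passage from the empty substitution back to
  \<open>s\<close> itself (S4).  For surjectivity, functionality of \<open>\<rhd>\<close> on base types lifts to all
  types through extensionality of the full function spaces, so any \<open>s \<rhd> a\<close> evaluates
  to \<open>a\<close>.\<close>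

lemma Wff_Nm [simp]: "Nm x \<in> Wff \<sigma> \<longleftrightarrow> \<sigma> = nty x"
  by (auto simp: Wff_def)

lemma Wff_Ap: "Ap s t \<in> Wff \<tau> \<longleftrightarrow> (\<exists>\<sigma>. s \<in> Wff (Fn \<sigma> \<tau>) \<and> t \<in> Wff \<sigma>)"
  by (auto simp: Wff_def split: option.splits ty.splits if_splits)

lemma Wff_Lm: "Lm x s \<in> Wff \<sigma> \<longleftrightarrow> (\<exists>\<tau>. \<sigma> = Fn (nty x) \<tau> \<and> s \<in> Wff \<tau>)"
  by (auto simp: Wff_def)

lemma eval_Lm_eqI:
  assumes "frame ap D" and "s \<in> Wff \<tau>" and f: "f \<in> D (Fn (nty x) \<tau>)"
    and f_eval: "\<forall>a\<in>D (nty x). eval ap D (I(x := a)) s = Some (ap f a)"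
  shows "eval ap D I (Lm x s) = Some f"
proof -
  have typeof: "typeof (Lm x s) = Some (Fn (nty x) \<tau>)"
    using \<open>s \<in> Wff \<tau>\<close> by (simp add: Wff_def)
  have "(THE g. g \<in> D (Fn (nty x) \<tau>) \<and> (\<forall>a\<in>D (nty x). eval ap D (I(x := a)) s = Some (ap g a))) = f"
  proof (rule the_equality)
    fix g assume g: "g \<in> D (Fn (nty x) \<tau>) \<and> (\<forall>a\<in>D (nty x). eval ap D (I(x := a)) s = Some (ap g a))"
    then have "\<forall>a\<in>D (nty x). ap g a = ap f a"
      using f_eval by fastforce
    then show "g = f"
      using \<open>frame ap D\<close> g f unfolding frame_def by blast
  qed (use f f_eval in blast)
  then show ?thesis
    using f f_eval by (simp only: eval.simps typeof option.case ty.case) auto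
qed

context
  fixes vs :: "'b \<Rightarrow> 'b tm \<Rightarrow> 'v \<Rightarrow> bool" and ap :: "'v \<Rightarrow> 'v \<Rightarrow> 'v"
    and fs :: "'b ty \<Rightarrow> 'b ty \<Rightarrow> 'v set"
begin

lemma vrel_in_vdom: "vrel vs ap fs \<sigma> s a \<Longrightarrow> a \<in> vdom vs ap fs \<sigma>"
  by (auto simp: vdom_def)

lemma vrel_Wff:
  assumes "value_system norm vs"
  shows "vrel vs ap fs \<sigma> s a \<Longrightarrow> s \<in> Wff \<sigma>"
  using assms by (cases \<sigma>) (auto simp: value_system_def)

lemma vrel_norm_iff:
  assumes N: "normalization ap norm" and V: "value_system norm vs"
  shows "s \<in> Wff \<sigma> \<Longrightarrow> vrel vs ap fs \<sigma> (norm s) a \<longleftrightarrow> vrel vs ap fs \<sigma> s a"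
proof (induction \<sigma> arbitrary: s a)
  case (Base \<beta>)
  then show ?case
    using V by (simp add: value_system_def)
next
  case (Fn \<sigma> \<tau>)
  have norm_s: "norm s \<in> Wff (Fn \<sigma> \<tau>)"
    using N Fn.prems by (simp add: normalization_def)
  have "vrel vs ap fs \<tau> (Ap (norm s) t) b \<longleftrightarrow> vrel vs ap fs \<tau> (Ap s t) b"
    if "t \<in> Wff \<sigma>" for t b
  proof -
    have "Ap s t \<in> Wff \<tau>" "Ap (norm s) t \<in> Wff \<tau>"
      using Fn.prems norm_s \<open>t \<in> Wff \<sigma>\<close> Wff_Ap by blast+
    moreover from this have "norm (Ap (norm s) t) = norm (Ap s t)"
      using N by (simp add: normalization_def)
    ultimately show ?thesis
      using Fn.IH(2) by metis
  qed
  then show ?case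
    using Fn.prems norm_s vrel_Wff[OF V] by auto
qed

corollary vrel_norm_eq:
  assumes "normalization ap norm" and "value_system norm vs"
    and "s \<in> Wff \<sigma>" and "t \<in> Wff \<sigma>" and "norm s = norm t"
  shows "vrel vs ap fs \<sigma> s a \<longleftrightarrow> vrel vs ap fs \<sigma> t a"
  using vrel_norm_iff[OF assms(1,2)] assms(3-5) by metis

lemma vrel_FnI:
  assumes F: "full_function_spaces vs ap fs" and u: "u \<in> Wff (Fn \<sigma> \<tau>)"
    and g: "\<And>t a. vrel vs ap fs \<sigma> t a \<Longrightarrow> vrel vs ap fs \<tau> (Ap u t) (g a)"
  obtains f where "vrel vs ap fs (Fn \<sigma> \<tau>) u f" and "\<forall>a\<in>vdom vs ap fs \<sigma>. ap f a = g a"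
proof -
  have "\<forall>a\<in>vdom vs ap fs \<sigma>. g a \<in> vdom vs ap fs \<tau>"
    using g by (auto simp: vdom_def)
  with F obtain f where f: "f \<in> fs \<sigma> \<tau>" and f_g: "\<forall>a\<in>vdom vs ap fs \<sigma>. ap f a = g a"
    unfolding full_function_spaces_def full_fs_def by blast
  have "vrel vs ap fs (Fn \<sigma> \<tau>) u f"
    using u f f_g g vrel_in_vdom by auto
  with f_g show thesis
    using that by blast
qed

lemma vrel_unique:
  assumes F: "full_function_spaces vs ap fs" and functional: "functional_vs vs"
  shows "vrel vs ap fs \<sigma> s a \<Longrightarrow> vrel vs ap fs \<sigma> s b \<Longrightarrow> a = b"
proof (induction \<sigma> arbitrary: s a b)
  case (Base \<beta>)
  then show ?case
    using functional by (auto simp: functional_vs_def)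
next
  case (Fn \<sigma> \<tau>)
  have "ap a c = ap b c" if "c \<in> vdom vs ap fs \<sigma>" for c
  proof -
    from that obtain t where "vrel vs ap fs \<sigma> t c"
      by (auto simp: vdom_def)
    then have "vrel vs ap fs \<tau> (Ap s t) (ap a c)" "vrel vs ap fs \<tau> (Ap s t) (ap b c)"
      using Fn.prems by auto
    then show ?thesis
      using Fn.IH(2) by blast
  qed
  moreover have "a \<in> fs \<sigma> \<tau>" "b \<in> fs \<sigma> \<tau>"
    using Fn.prems by auto
  moreover have "full_fs ap (vdom vs ap fs \<sigma>) (vdom vs ap fs \<tau>) (fs \<sigma> \<tau>)"
    using F by (simp add: full_function_spaces_def)
  ultimately show ?case
    unfolding full_fs_def by metis
qed

definition agrees :: "('b name \<rightharpoonup> 'b tm) \<Rightarrow> ('b name \<Rightarrow> 'v) \<Rightarrow> bool" where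
  "agrees \<theta> J \<longleftrightarrow> substitution \<theta> \<and>
     (\<forall>x. vrel vs ap fs (nty x) (case \<theta> x of Some t \<Rightarrow> t | None \<Rightarrow> Nm x) (J x))"

lemma agrees_empty: "agrees Map.empty J \<longleftrightarrow> (\<forall>x. vrel vs ap fs (nty x) (Nm x) (J x))"
  by (simp add: agrees_def substitution_def)

lemma agrees_update:
  assumes "value_system norm vs" and "agrees \<theta> J" and "vrel vs ap fs (nty x) t a"
  shows "agrees (\<theta>(x \<mapsto> t)) (J(x := a))"
  using assms vrel_Wff[OF assms(1,3)] by (auto simp: agrees_def substitution_def)

lemma eval_vrel_subst:
  assumes N: "normalization ap norm" and S: "subst_ext norm sub"
    and V: "value_system norm vs" and F: "full_function_spaces vs ap fs"
    and Fr: "frame ap (vdom vs ap fs)"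
  shows "s \<in> Wff \<sigma> \<Longrightarrow> agrees \<theta> J \<Longrightarrow>
     \<exists>a. eval ap (vdom vs ap fs) J s = Some a \<and> vrel vs ap fs \<sigma> (sub \<theta> s) a"
proof (induction s arbitrary: \<sigma> \<theta> J)
  case (Nm x)
  then have "sub \<theta> (Nm x) = (case \<theta> x of Some t \<Rightarrow> t | None \<Rightarrow> Nm x)"
    using S unfolding agrees_def subst_ext_def by blast
  moreover have "vrel vs ap fs (nty x) (case \<theta> x of Some t \<Rightarrow> t | None \<Rightarrow> Nm x) (J x)"
    using Nm.prems(2) by (metis agrees_def)
  ultimately show ?case
    using Nm.prems(1) by simp
next
  case (Ap s t)
  then obtain \<rho> where "s \<in> Wff (Fn \<rho> \<sigma>)" and "t \<in> Wff \<rho>"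
    using Wff_Ap by blast
  with Ap.IH Ap.prems(2) obtain f a
    where "eval ap (vdom vs ap fs) J s = Some f" "vrel vs ap fs (Fn \<rho> \<sigma>) (sub \<theta> s) f"
      and "eval ap (vdom vs ap fs) J t = Some a" "vrel vs ap fs \<rho> (sub \<theta> t) a"
    by meson
  moreover have "sub \<theta> (Ap s t) = Ap (sub \<theta> s) (sub \<theta> t)"
    using S Ap.prems by (auto simp: agrees_def subst_ext_def)
  ultimately show ?case
    by auto
next
  case (Lm x s)
  then obtain \<tau> where \<sigma>: "\<sigma> = Fn (nty x) \<tau>" and s: "s \<in> Wff \<tau>"
    using Wff_Lm by blast
  let ?D = "vdom vs ap fs"
  define g where "g a = the (eval ap ?D (J(x := a)) s)" for a
  have IH: "eval ap ?D (J(x := a)) s = Some (g a) \<and> vrel vs ap fs \<tau> (sub (\<theta>(x \<mapsto> t)) s) (g a)"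
    if "vrel vs ap fs (nty x) t a" for t a
    using Lm.IH[OF s agrees_update[OF V Lm.prems(2) that]] unfolding g_def by (metis option.sel)
  have \<theta>: "substitution \<theta>"
    using Lm.prems(2) by (simp add: agrees_def)
  have Lm_Wff: "Lm x s \<in> Wff (Fn (nty x) \<tau>)"
    using s Wff_Lm by blast
  then have sub_Lm: "sub \<theta> (Lm x s) \<in> Wff (Fn (nty x) \<tau>)"
    using S \<theta> by (auto simp: subst_ext_def)
  have "vrel vs ap fs \<tau> (Ap (sub \<theta> (Lm x s)) t) (g a)"
    if ta: "vrel vs ap fs (nty x) t a" for t a
  proof -
    have t: "t \<in> Wff (nty x)"
      using vrel_Wff[OF V ta] .
    have "norm (Ap (sub \<theta> (Lm x s)) t) = norm (sub (\<theta>(x \<mapsto> t)) s)"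
      using S \<theta> Lm_Wff t unfolding subst_ext_def by blast
    moreover have "Ap (sub \<theta> (Lm x s)) t \<in> Wff \<tau>"
      using sub_Lm t Wff_Ap by blast
    moreover have "sub (\<theta>(x \<mapsto> t)) s \<in> Wff \<tau>"
      using S s \<theta> t by (auto simp: subst_ext_def substitution_def)
    ultimately show ?thesis
      using IH[OF ta] vrel_norm_eq[OF N V] by blast
  qed
  with F sub_Lm obtain f where f: "vrel vs ap fs (Fn (nty x) \<tau>) (sub \<theta> (Lm x s)) f"
    and f_g: "\<forall>a\<in>?D (nty x). ap f a = g a"
    by (rule vrel_FnI)
  have "eval ap ?D J (Lm x s) = Some f"
  proof (rule eval_Lm_eqI[OF Fr s vrel_in_vdom[OF f]])
    show "\<forall>a\<in>?D (nty x). eval ap ?D (J(x := a)) s = Some (ap f a)"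
      using IH f_g by (auto simp: vdom_def)
  qed
  with f \<sigma> show ?case
    by blast
qed

end

theorem theorem3p4:
  fixes norm :: "'b::countable tm \<Rightarrow> 'b tm"
    and sub :: "('b name \<rightharpoonup> 'b tm) \<Rightarrow> 'b tm \<Rightarrow> 'b tm"
    and ap :: "'v \<Rightarrow> 'v \<Rightarrow> 'v"
    and fs :: "'b ty \<Rightarrow> 'b ty \<Rightarrow> 'v set"
    and vs :: "'b \<Rightarrow> 'b tm \<Rightarrow> 'v \<Rightarrow> bool"
    and I :: "'b name \<Rightarrow> 'v"
  assumes "normalization ap norm"
    and "subst_ext norm sub"
    and "value_system norm vs"
    and "full_function_spaces vs ap fs"
    and "admissible vs ap fs I"
  shows "is_interp ap (vdom vs ap fs) I
         \<and> (\<forall>\<sigma>. \<forall>s\<in>Wff \<sigma>. \<exists>a. eval ap (vdom vs ap fs) I s = Some a \<and> vrel vs ap fs \<sigma> s a)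
         \<and> (functional_vs vs \<longrightarrow> surjective_interp ap (vdom vs ap fs) I)"
proof -
  note N = assms(1) and S = assms(2) and V = assms(3) and F = assms(4)
  let ?D = "vdom vs ap fs"
  have A: "assignment ap ?D I" and I: "agrees vs ap fs Map.empty I"
    using assms(5) by (auto simp: admissible_def agrees_empty)
  have eval: "\<exists>a. eval ap ?D I s = Some a \<and> vrel vs ap fs \<sigma> s a" if s: "s \<in> Wff \<sigma>" for \<sigma> s
  proof -
    have "substitution Map.empty"
      by (simp add: substitution_def)
    with S s have "sub Map.empty s \<in> Wff \<sigma>" "norm (sub Map.empty s) = norm s"
      unfolding subst_ext_def by blast+
    then show ?thesis
      using eval_vrel_subst[OF N S V F _ s I] A vrel_norm_eq[OF N V _ s]
      by (metis assignment_def)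
  qed
  then have interp: "is_interp ap ?D I"
    using A by (auto simp: is_interp_def)
  have "surjective_interp ap ?D I" if "functional_vs vs"
  proof -
    have "\<exists>s\<in>Wff \<sigma>. eval ap ?D I s = Some a" if "vrel vs ap fs \<sigma> s a" for \<sigma> s a
      using eval[OF vrel_Wff[OF V that]] vrel_Wff[OF V that] vrel_unique[OF F \<open>functional_vs vs\<close> that]
      by metis
    with interp show ?thesis
      by (auto simp: surjective_interp_def vdom_def)
  qed
  with eval interp show ?thesis
    by blast
qed

end
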